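(* Let $N\ge2$ and $L=(a_1,\dots,a_N)\in\mathbb{N}_0^N$ with $a_1>0$, and let $H$ be the sequence defined by $H_n=1+\sum_{k=1}^{n-1}a_kH_{n-k}$ for $1\le n\le N+1$ and $H_{n+N}=a_1H_{n+N-1}+\cdots+a_{N-1}H_{n+1}+(1+a_N)H_n$ for all $n\in\mathbb{N}$. Let $\psi$ be the unique positive real zero of $g(x)=x^N-\sum_{k=1}^{N-1}a_kx^{N-k}-(1+a_N)$. Then there are positive real constants $\delta$ and $r$ with $r<1$ such that $H_n=\delta\psi^n+O(\psi^{rn})$ for $n\in\mathbb{N}$.
   Context: $\mathbb{N}_0=\mathbb{N}\cup\{0\}$. (The sequence $H$ is the fundamental sequence of the periodic Zeckendorf collection with principal maximal block $L$; $g$ has exactly one positive real zero, it is simple, and all other complex zeros have modulus less than $\psi$.) *)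

theory Defs
  imports "HOL-Analysis.Analysis" "HOL-Library.Landau_Symbols"
begin

definition gpoly :: "nat \<Rightarrow> (nat \<Rightarrow> nat) \<Rightarrow> real \<Rightarrow> real" where
  "gpoly N a x = x ^ N - (\<Sum>k=1..N-1. real (a k) * x ^ (N - k)) - (1 + real (a N))"

end

theory Submission
  imports Defs
begin

(*
  Dividing by \<psi>^n turns the recurrence into v (n + N) = \<Sum>k=1..N. w k * v (n + N - k) with
  weights w k = c k / \<psi>^k \<ge> 0 that sum to 1 because g \<psi> = 0, and w 1 > 0 because a 1 > 0.
  Every term is thus a convex combination of the N preceding ones, so the minimum and the
  maximum of v over a window of N consecutive terms are monotone.  Since w 1 > 0, a term far
  from the bottom (top) of a window pushes all terms of the next window away from it by a fixed
  fraction, so the oscillation over a window shrinks by the factor 1 - w 1 ^ (N - 1) every N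
  steps.  Hence v converges geometrically, at a rate \<rho> < 1, to a limit \<delta> > 0, and multiplying
  back by \<psi>^n gives the error O((\<psi> \<rho>)^n) = O(\<psi> powr (r n)) with r < 1.
*)

lemma power_div_le_geometric:
  fixes q :: real
  assumes "0 \<le> q" "q < 1" "1 \<le> N"
  shows "\<exists>C \<rho>. 0 < \<rho> \<and> \<rho> < 1 \<and> (\<forall>n. q ^ (n div N) \<le> C * \<rho> ^ n)"
proof -
  define p where "p = max q (1/2)"
  have p: "0 < p" "p < 1" "q \<le> p"
    using assms by (auto simp: p_def)
  define \<rho> where "\<rho> = root N p"
  have \<rho>: "0 < \<rho>" "\<rho> < 1" "\<rho> ^ N = p"
    using p assms(3) by (auto simp: \<rho>_def)
  have "q ^ (n div N) \<le> 1 / p * \<rho> ^ n" for n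
  proof -
    have "N * Suc (n div N) = N * (n div N) + N" "n mod N < N"
      using assms(3) by simp_all
    then have "n \<le> N * Suc (n div N)"
      using mult_div_mod_eq[of N n] by linarith
    then have "\<rho> ^ (N * Suc (n div N)) \<le> \<rho> ^ n"
      using \<rho> by (intro power_decreasing) auto
    then have \<rho>_bound: "p ^ Suc (n div N) \<le> \<rho> ^ n"
      by (simp only: power_mult \<rho>(3))
    have "q ^ (n div N) \<le> p ^ (n div N)"
      using assms(1) p(3) by (simp add: power_mono)
    also have "\<dots> = p ^ Suc (n div N) / p"
      using p by simp
    also have "\<dots> \<le> \<rho> ^ n / p"
      using \<rho>_bound p by (intro divide_right_mono) auto
    finally show ?thesis by simp
  qed
  with \<rho> show ?thesis by blast
qed

locale convex_recurrence =
  fixes N :: nat and w :: "nat \<Rightarrow> real" and v :: "nat \<Rightarrow> real"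
  assumes order_pos: "1 \<le> N"
    and weight_nonneg: "\<And>k. 0 \<le> w k"
    and weight_1_pos: "0 < w 1"
    and weights_sum: "(\<Sum>k=1..N. w k) = 1"
    and recurrence: "\<And>n. v (n + N) = (\<Sum>k=1..N. w k * v (n + N - k))"
begin

lemma uminus: "convex_recurrence N w (\<lambda>n. - v n)"
  by unfold_locales
    (use order_pos weight_nonneg weight_1_pos weights_sum recurrence in \<open>simp_all add: sum_negf\<close>)

lemma weight_1_le_1: "w 1 \<le> 1"
proof -
  have "w 1 \<le> (\<Sum>k=1..N. w k)"
    using order_pos weight_nonneg by (intro member_le_sum) auto
  then show ?thesis using weights_sum by simp
qed

lemma contraction_factor: "0 \<le> 1 - w 1 ^ (N - 1)" "1 - w 1 ^ (N - 1) < 1"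
  using weight_1_pos weight_1_le_1 by (simp_all add: power_le_one)

lemma excess_over_lower_bound:
  assumes "\<And>k. k \<in> {1..N} \<Longrightarrow> lo \<le> v (n + N - k)"
  shows "w 1 * (v (n + N - 1) - lo) \<le> v (n + N) - lo"
proof -
  have "(\<Sum>k=1..N. w k * (v (n + N - k) - lo))
      = (\<Sum>k=1..N. w k * v (n + N - k)) - (\<Sum>k=1..N. w k) * lo"
    by (simp add: right_diff_distrib sum_subtractf sum_distrib_right)
  then have "v (n + N) - lo = (\<Sum>k=1..N. w k * (v (n + N - k) - lo))"
    using weights_sum by (simp add: recurrence)
  also have "\<dots> = w 1 * (v (n + N - 1) - lo) + (\<Sum>k=2..N. w k * (v (n + N - k) - lo))"
    using order_pos by (simp add: sum.atLeast_Suc_atMost numeral_2_eq_2)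
  also have "\<dots> \<ge> w 1 * (v (n + N - 1) - lo)"
    using assms weight_nonneg by (auto intro!: sum_nonneg)
  finally show ?thesis .
qed

lemma lower_bound_persists:
  assumes "\<And>i. n \<le> i \<Longrightarrow> i < n + N \<Longrightarrow> lo \<le> v i" and "n \<le> i"
  shows "lo \<le> v i"
  using assms(2)
proof (induction i rule: less_induct)
  case (less i)
  show ?case
  proof (cases "i < n + N")
    case True
    with less.prems assms(1) show ?thesis by blast
  next
    case False
    define j where "j = i - N"
    have i: "i = j + N" and "n \<le> j"
      using False by (auto simp: j_def)
    then have lo: "lo \<le> v (j + N - k)" if "k \<in> {1..N}" for k
      using less.IH that order_pos by auto
    then have "0 \<le> w 1 * (v (j + N - 1) - lo)"
      using weight_1_pos order_pos by simp
    with excess_over_lower_bound[OF lo] show ?thesis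
      by (simp add: i)
  qed
qed

lemma upper_bound_persists:
  assumes "\<And>i. n \<le> i \<Longrightarrow> i < n + N \<Longrightarrow> v i \<le> hi" and "n \<le> i"
  shows "v i \<le> hi"
  using convex_recurrence.lower_bound_persists[OF uminus, of n "- hi" i] assms by simp

lemma excess_over_lower_bound_decay:
  assumes "\<And>i. n \<le> i \<Longrightarrow> lo \<le> v i" and "n + N \<le> i"
  shows "w 1 ^ j * (v i - lo) \<le> v (i + j) - lo"
proof (induction j)
  case 0
  then show ?case by simp
next
  case (Suc j)
  define p where "p = i + j + 1 - N"
  have p: "p + N = i + j + 1" "p + N - 1 = i + j" "n \<le> p"
    using assms(2) order_pos by (auto simp: p_def)
  have lo: "lo \<le> v (p + N - k)" if "k \<in> {1..N}" for k
    using assms(1)[of "p + N - k"] that p(3) by auto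
  have "w 1 ^ Suc j * (v i - lo) \<le> w 1 * (v (i + j) - lo)"
    using Suc weight_1_pos by (simp add: mult.assoc)
  also have "\<dots> \<le> v (i + Suc j) - lo"
    using excess_over_lower_bound[OF lo] p by simp
  finally show ?case .
qed

lemma lower_bound_gain:
  assumes "\<And>i. n \<le> i \<Longrightarrow> lo \<le> v i" and "n + N \<le> i" "i < n + 2 * N"
  shows "lo + w 1 ^ (N - 1) * (v (n + N) - lo) \<le> v i"
proof -
  define j where "j = i - (n + N)"
  have i: "i = n + N + j" and "j \<le> N - 1"
    using assms(2,3) by (auto simp: j_def)
  have "w 1 ^ (N - 1) * (v (n + N) - lo) \<le> w 1 ^ j * (v (n + N) - lo)"
    using \<open>j \<le> N - 1\<close> assms(1) weight_1_pos weight_1_le_1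
    by (intro mult_right_mono power_decreasing) auto
  also have "\<dots> \<le> v i - lo"
    using excess_over_lower_bound_decay[of n lo "n + N" j] assms(1) i by auto
  finally show ?thesis by simp
qed

lemma upper_bound_gain:
  assumes "\<And>i. n \<le> i \<Longrightarrow> v i \<le> hi" and "n + N \<le> i" "i < n + 2 * N"
  shows "v i \<le> hi - w 1 ^ (N - 1) * (hi - v (n + N))"
  using convex_recurrence.lower_bound_gain[OF uminus, of n "- hi" i] assms
  by (simp add: algebra_simps)

definition window_min :: "nat \<Rightarrow> real" where
  "window_min n = Min (v ` {n..<n + N})"

definition window_max :: "nat \<Rightarrow> real" where
  "window_max n = Max (v ` {n..<n + N})"

definition oscillation :: "nat \<Rightarrow> real" where
  "oscillation n = window_max n - window_min n"

lemma window_finite_nonempty: "finite (v ` {n..<n + N})" "v ` {n..<n + N} \<noteq> {}"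
  using order_pos by auto

lemma window_min_le: "n \<le> i \<Longrightarrow> window_min n \<le> v i"
  using lower_bound_persists[of n "window_min n" i] window_finite_nonempty
  by (auto simp: window_min_def)

lemma le_window_max: "n \<le> i \<Longrightarrow> v i \<le> window_max n"
  using upper_bound_persists[of n "window_max n" i] window_finite_nonempty
  by (auto simp: window_max_def)

lemma window_min_mono: "n \<le> p \<Longrightarrow> window_min n \<le> window_min p"
  using window_finite_nonempty window_min_le by (auto simp: window_min_def[of p] Min_ge_iff)

lemma window_max_antimono: "n \<le> p \<Longrightarrow> window_max p \<le> window_max n"
  using window_finite_nonempty le_window_max by (auto simp: window_max_def[of p] Max_le_iff)

lemma window_min_le_window_max: "window_min n \<le> window_max p"
  using window_min_le[of n "max n p"] le_window_max[of p "max n p"] by simp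

lemma oscillation_nonneg: "0 \<le> oscillation n"
  using window_min_le_window_max[of n n] by (simp add: oscillation_def)

lemma oscillation_antimono: "n \<le> p \<Longrightarrow> oscillation p \<le> oscillation n"
  using window_min_mono window_max_antimono by (fastforce simp: oscillation_def)

lemma oscillation_contraction:
  "oscillation (n + N) \<le> (1 - w 1 ^ (N - 1)) * oscillation n"
proof -
  let ?lo = "window_min n" and ?hi = "window_max n" and ?x = "v (n + N)"
  have "?lo + w 1 ^ (N - 1) * (?x - ?lo) \<le> window_min (n + N)"
    using window_finite_nonempty lower_bound_gain[of n ?lo] window_min_le
    by (auto simp: window_min_def[of "n + N"] Min_ge_iff)
  moreover have "window_max (n + N) \<le> ?hi - w 1 ^ (N - 1) * (?hi - ?x)"
    using window_finite_nonempty upper_bound_gain[of n ?hi] le_window_max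
    by (auto simp: window_max_def[of "n + N"] Max_le_iff)
  ultimately show ?thesis
    by (simp add: oscillation_def algebra_simps)
qed

lemma oscillation_decay:
  "oscillation n \<le> (1 - w 1 ^ (N - 1)) ^ (n div N) * oscillation 0"
proof -
  let ?q = "1 - w 1 ^ (N - 1)"
  have "oscillation (k * N) \<le> ?q ^ k * oscillation 0" for k
  proof (induction k)
    case (Suc k)
    have "oscillation (Suc k * N) \<le> ?q * oscillation (k * N)"
      using oscillation_contraction[of "k * N"] by (simp add: add.commute)
    also have "\<dots> \<le> ?q * (?q ^ k * oscillation 0)"
      using Suc contraction_factor(1) by (intro mult_left_mono)
    finally show ?case by simp
  qed simp
  moreover have "oscillation n \<le> oscillation (n div N * N)"
    by (intro oscillation_antimono) simp
  ultimately show ?thesis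
    by (meson order_trans)
qed

definition limit :: real where
  "limit = Sup (range window_min)"

lemma limit_in_windows: "window_min n \<le> limit" "limit \<le> window_max n"
proof -
  have "bdd_above (range window_min)"
    using window_min_le_window_max by (intro bdd_aboveI2)
  then show "window_min n \<le> limit"
    unfolding limit_def by (intro cSUP_upper) auto
  show "limit \<le> window_max n"
    unfolding limit_def using window_min_le_window_max by (intro cSUP_least) auto
qed

lemma geometric_convergence:
  "\<exists>C \<rho>. 0 < \<rho> \<and> \<rho> < 1 \<and> (\<forall>n. \<bar>v n - limit\<bar> \<le> C * \<rho> ^ n)"
proof -
  obtain C \<rho> where \<rho>: "0 < \<rho>" "\<rho> < 1"
    and bound: "\<And>n. (1 - w 1 ^ (N - 1)) ^ (n div N) \<le> C * \<rho> ^ n"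
    using power_div_le_geometric[OF contraction_factor order_pos] by blast
  have "\<bar>v n - limit\<bar> \<le> oscillation 0 * C * \<rho> ^ n" for n
  proof -
    have "\<bar>v n - limit\<bar> \<le> oscillation n"
      using limit_in_windows[of n] window_min_le[of n n] le_window_max[of n n]
      unfolding oscillation_def by linarith
    also have "\<dots> \<le> (1 - w 1 ^ (N - 1)) ^ (n div N) * oscillation 0"
      by (rule oscillation_decay)
    also have "\<dots> \<le> C * \<rho> ^ n * oscillation 0"
      using bound oscillation_nonneg by (intro mult_right_mono)
    finally show ?thesis by (simp add: mult_ac)
  qed
  with \<rho> show ?thesis by blast
qed

end

lemma ex_powr_exponent_lt_1:
  fixes x \<rho> :: real
  assumes "1 < x" "0 < \<rho>" "\<rho> < 1"
  shows "\<exists>r. 0 < r \<and> r < 1 \<and> x * \<rho> \<le> x powr r"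
proof -
  define r where "r = max (1/2) (log x (x * \<rho>))"
  have "log x (x * \<rho>) < log x x"
    using assms by (intro log_less) auto
  then have "r < 1"
    using assms(1) by (simp add: r_def)
  moreover have "x * \<rho> \<le> x powr r"
  proof -
    have "x * \<rho> = x powr (log x (x * \<rho>))"
      using assms by simp
    also have "\<dots> \<le> x powr r"
      using assms(1) by (intro powr_mono) (auto simp: r_def)
    finally show ?thesis .
  qed
  ultimately show ?thesis
    by (intro exI[of _ r]) (simp add: r_def)
qed

lemma bigo_powr_of_geometric_ratio_error:
  fixes f :: "nat \<Rightarrow> real" and x \<rho> \<delta> C :: real
  assumes "1 < x" "0 < \<rho>" "\<rho> < 1"
    and ratio_error: "\<And>n. \<bar>f (Suc n) / x ^ Suc n - \<delta>\<bar> \<le> C * \<rho> ^ n"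
  shows "\<exists>r. 0 < r \<and> r < 1 \<and> (\<lambda>n. f n - \<delta> * x ^ n) \<in> O(\<lambda>n. x powr (r * real n))"
proof -
  obtain r where r: "0 < r" "r < 1" "x * \<rho> \<le> x powr r"
    using ex_powr_exponent_lt_1[OF assms(1-3)] by blast
  have "\<bar>f n - \<delta> * x ^ n\<bar> \<le> \<bar>C\<bar> / \<rho> * x powr (r * real n)" if "1 \<le> n" for n
  proof -
    obtain m where n: "n = Suc m"
      using \<open>1 \<le> n\<close> by (cases n) auto
    have "\<bar>f n - \<delta> * x ^ n\<bar> = x ^ n * \<bar>f n / x ^ n - \<delta>\<bar>"
      using assms(1) by (simp add: abs_mult field_simps)
    also have "\<dots> \<le> x ^ n * (\<bar>C\<bar> * \<rho> ^ m)"
    proof -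
      have "C * \<rho> ^ m \<le> \<bar>C\<bar> * \<rho> ^ m"
        using assms(2) by (intro mult_right_mono) auto
      then show ?thesis
        using ratio_error[of m] assms(1) unfolding n by (intro mult_left_mono) auto
    qed
    also have "\<dots> = \<bar>C\<bar> / \<rho> * (x * \<rho>) ^ n"
      using assms(2) by (simp add: n power_mult_distrib)
    also have "\<dots> \<le> \<bar>C\<bar> / \<rho> * (x powr r) ^ n"
      using r assms by (intro mult_left_mono power_mono) auto
    also have "(x powr r) ^ n = x powr (r * real n)"
      using assms(1) by (simp add: powr_powr flip: powr_realpow)
    finally show ?thesis .
  qed
  then have "(\<lambda>n. f n - \<delta> * x ^ n) \<in> O(\<lambda>n. x powr (r * real n))"
    by (intro bigoI[of _ "\<bar>C\<bar> / \<rho>"]) (auto simp: eventually_at_top_linorder)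
  with r show ?thesis by blast
qed

lemma divide_power_recurrence:
  fixes u c :: "nat \<Rightarrow> real" and x :: real
  assumes "u (m + N) = (\<Sum>k=1..N. c k * u (m + N - k))" and "x \<noteq> 0"
  shows "u (m + N) / x ^ (m + N)
    = (\<Sum>k=1..N. c k / x ^ k * (u (m + N - k) / x ^ (m + N - k)))"
  unfolding assms(1) sum_divide_distrib
proof (rule sum.cong)
  fix k assume "k \<in> {1..N}"
  then have "x ^ (m + N) = x ^ k * x ^ (m + N - k)"
    by (simp flip: power_add)
  then show "c k * u (m + N - k) / x ^ (m + N)
      = c k / x ^ k * (u (m + N - k) / x ^ (m + N - k))"
    by simp
qed simp

(* c k in H (n + N) = \<Sum>k=1..N. c k * H (n + N - k), so that g x = x^N - \<Sum>k=1..N. c k * x^(N-k) *)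
definition rec_coeff :: "nat \<Rightarrow> (nat \<Rightarrow> nat) \<Rightarrow> nat \<Rightarrow> real" where
  "rec_coeff N a k = (if k = N then 1 + real (a N) else real (a k))"

lemma sum_rec_coeff:
  assumes "1 \<le> N"
  shows "(\<Sum>k=1..N. rec_coeff N a k * f k)
    = (\<Sum>k=1..N-1. real (a k) * f k) + (1 + real (a N)) * f N"
proof -
  have "{1..N} = insert N {1..N-1}" "N \<notin> {1..N-1}"
    using assms by auto
  then have "(\<Sum>k=1..N. rec_coeff N a k * f k)
      = rec_coeff N a N * f N + (\<Sum>k=1..N-1. rec_coeff N a k * f k)"
    by simp
  also have "(\<Sum>k=1..N-1. rec_coeff N a k * f k) = (\<Sum>k=1..N-1. real (a k) * f k)"
    by (intro sum.cong) (auto simp: rec_coeff_def)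
  finally show ?thesis
    by (simp add: rec_coeff_def)
qed

lemma rec_coeff_nonneg: "0 \<le> rec_coeff N a k"
  by (simp add: rec_coeff_def)

lemma rec_coeff_weights_sum:
  assumes "1 \<le> N" "0 < x" "gpoly N a x = 0"
  shows "(\<Sum>k=1..N. rec_coeff N a k / x ^ k) = 1"
proof -
  have "x ^ N * (\<Sum>k=1..N. rec_coeff N a k / x ^ k)
      = (\<Sum>k=1..N. rec_coeff N a k * x ^ (N - k))"
    unfolding sum_distrib_left
  proof (rule sum.cong)
    fix k assume "k \<in> {1..N}"
    then have "x ^ N = x ^ (N - k) * x ^ k"
      by (simp flip: power_add)
    then show "x ^ N * (rec_coeff N a k / x ^ k) = rec_coeff N a k * x ^ (N - k)"
      using assms(2) by simp
  qed simp
  also have "\<dots> = x ^ N"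
    using assms(3) unfolding sum_rec_coeff[OF assms(1)] by (simp add: gpoly_def)
  finally show ?thesis
    using assms(2) by simp
qed

lemma gpoly_pos_root_gt_1:
  assumes "2 \<le> N" "0 < a 1" "0 < x" "gpoly N a x = 0"
  shows "1 < x"
proof -
  let ?w = "\<lambda>k. rec_coeff N a k / x ^ k"
  have "?w 1 + ?w N = (\<Sum>k\<in>{1, N}. ?w k)"
    using assms(1) by simp
  also have "\<dots> \<le> (\<Sum>k=1..N. ?w k)"
    using assms(1,3) rec_coeff_nonneg by (intro sum_mono2) auto
  also have "\<dots> = 1"
    using assms by (intro rec_coeff_weights_sum) auto
  finally have "?w 1 + ?w N \<le> 1" .
  moreover have "0 < ?w N"
    using assms(3) by (simp add: rec_coeff_def add_pos_nonneg)
  ultimately have "?w 1 < 1"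
    by linarith
  then have "real (a 1) < x"
    using assms(1,3) by (simp add: rec_coeff_def)
  with assms(2) show ?thesis
    by linarith
qed

(* The recurrence holds from index 1 on, hence the shift by one. *)
lemma convex_recurrence_normalized:
  fixes H :: "nat \<Rightarrow> nat" and \<psi> :: real
  assumes N: "1 \<le> N" and "0 < a 1"
    and hrec: "\<And>n. 1 \<le> n \<Longrightarrow>
      H (n + N) = (\<Sum>k=1..N-1. a k * H (n + N - k)) + (1 + a N) * H n"
    and "0 < \<psi>" "gpoly N a \<psi> = 0"
  shows "convex_recurrence N (\<lambda>k. rec_coeff N a k / \<psi> ^ k) (\<lambda>n. real (H (Suc n)) / \<psi> ^ Suc n)"
proof
  show "0 \<le> rec_coeff N a k / \<psi> ^ k" for k
    using \<open>0 < \<psi>\<close> by (simp add: rec_coeff_nonneg)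
  show "0 < rec_coeff N a 1 / \<psi> ^ 1"
    using \<open>0 < a 1\<close> \<open>0 < \<psi>\<close> by (simp add: rec_coeff_def)
  show "(\<Sum>k=1..N. rec_coeff N a k / \<psi> ^ k) = 1"
    using N \<open>0 < \<psi>\<close> \<open>gpoly N a \<psi> = 0\<close> by (rule rec_coeff_weights_sum)
  show "real (H (Suc (n + N))) / \<psi> ^ Suc (n + N)
    = (\<Sum>k=1..N. rec_coeff N a k / \<psi> ^ k * (real (H (Suc (n + N - k))) / \<psi> ^ Suc (n + N - k)))"
    for n
  proof -
    have "real (H (Suc n + N)) = (\<Sum>k=1..N. rec_coeff N a k * real (H (Suc n + N - k)))"
      unfolding sum_rec_coeff[OF N] using hrec[of "Suc n"] by (simp add: distrib_right)
    from divide_power_recurrence[OF this] \<open>0 < \<psi>\<close> show ?thesis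
      by (simp add: Suc_diff_le)
  qed
qed (rule N)

theorem theorem6p7:
  fixes N :: nat and a :: "nat \<Rightarrow> nat" and H :: "nat \<Rightarrow> nat" and \<psi> :: real
  assumes hN: "N \<ge> 2"
    and ha1: "a 1 > 0"
    and hinit: "\<And>n. 1 \<le> n \<Longrightarrow> n \<le> N + 1 \<Longrightarrow>
                  H n = 1 + (\<Sum>k=1..n-1. a k * H (n - k))"
    and hrec: "\<And>n. 1 \<le> n \<Longrightarrow>
                  H (n + N) = (\<Sum>k=1..N-1. a k * H (n + N - k)) + (1 + a N) * H n"
    and hpsi_pos: "\<psi> > 0"
    and hpsi_root: "gpoly N a \<psi> = 0"
  shows "\<exists>\<delta> r. \<delta> > 0 \<and> r > 0 \<and> r < 1 \<and>
           (\<lambda>n. real (H n) - \<delta> * \<psi> ^ n) \<in> O(\<lambda>n. \<psi> powr (r * real n))"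
proof -
  define v where "v n = real (H (Suc n)) / \<psi> ^ Suc n" for n
  interpret convex_recurrence N "\<lambda>k. rec_coeff N a k / \<psi> ^ k" v
    unfolding v_def using hN ha1 hrec hpsi_pos hpsi_root by (intro convex_recurrence_normalized) auto
  \<comment> \<open>Of the initial conditions only the positivity of H 1, ..., H N is needed.\<close>
  have "0 < H (Suc i)" if "i < N" for i
    using hinit[of "Suc i"] that by simp
  then have "0 < window_min 0"
    using window_finite_nonempty[of 0] hpsi_pos by (simp add: window_min_def v_def)
  then have "0 < limit"
    using limit_in_windows(1)[of 0] by linarith
  moreover obtain C \<rho> where "0 < \<rho>" "\<rho> < 1" "\<And>n. \<bar>v n - limit\<bar> \<le> C * \<rho> ^ n"
    using geometric_convergence by blast
  then obtain r where "0 < r" "r < 1"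
    "(\<lambda>n. real (H n) - limit * \<psi> ^ n) \<in> O(\<lambda>n. \<psi> powr (r * real n))"
    using bigo_powr_of_geometric_ratio_error[of \<psi> \<rho> "\<lambda>n. real (H n)" limit C]
      gpoly_pos_root_gt_1[OF hN ha1 hpsi_pos hpsi_root]
    unfolding v_def by blast
  ultimately show ?thesis
    by (intro exI[of _ limit] exI[of _ r]) auto
qed

end
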